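(* For an integer $n$ and real $x$, define $$S_n(x)=(18n+24)\sin(x)-(9n+27)\sin((n+1)x)+9n\sin((n+2)x)+2\sin(4x)-\sin(5x)$$ and $$L_n(x)=(18n+24)\sin(x)-18n\sin(x/2)-29.1.$$ Then for all integers $n\geq 21$ and all $x\in(0,2\pi/3)$, $S_n(x)>L_n(x)$. *)

theory Defs
  imports Complex_Main
begin

definition S :: "int \<Rightarrow> real \<Rightarrow> real" where
  "S n x = (18 * of_int n + 24) * sin x - (9 * of_int n + 27) * sin ((of_int n + 1) * x)
          + 9 * of_int n * sin ((of_int n + 2) * x) + 2 * sin (4 * x) - sin (5 * x)"

definition L :: "int \<Rightarrow> real \<Rightarrow> real" where
  "L n x = (18 * of_int n + 24) * sin x - 18 * of_int n * sin (x / 2) - 29.1"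

end

theory Submission
  imports Defs
begin

text \<open>With \<open>\<theta> = (n + 3/2) x\<close>, the sum-to-product formula
  \<open>sin ((n+2) x) - sin ((n+1) x) = 2 sin (x/2) cos \<theta>\<close> turns \<open>S n x - L n x\<close> into
  \<open>18 n sin (x/2) (1 + cos \<theta>) - 27 sin (\<theta> - x/2) + 2 sin (4x) - sin (5x) + 29.1\<close>.
  For \<open>x \<le> \<pi>/4\<close> all terms except \<open>-27 sin (\<theta> - x/2) - sin (5x)\<close> are nonnegative, which
  leaves a margin of \<open>1.1\<close>. For \<open>\<pi>/4 < x < 2\<pi>/3\<close> one has \<open>0.38 \<le> sin (x/2) \<le> 0.87\<close>,
  and the claim reduces to a quadratic inequality in \<open>cos \<theta>\<close> and \<open>sin \<theta> cos (x/2)\<close>,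
  whose proof only needs \<open>27 t \<le> 75 t\<^sup>2 + 2.43\<close>.\<close>

lemma S_minus_L_eq:
  "S n x - L n x = 18 * of_int n * sin (x/2) * (1 + cos ((of_int n + 3/2) * x))
     - 27 * sin ((of_int n + 1) * x) + 2 * sin (4*x) - sin (5*x) + 29.1"
proof -
  have "sin ((of_int n + 2) * x) - sin ((of_int n + 1) * x)
      = 2 * sin (x/2) * cos ((of_int n + 3/2) * x)"
    by (simp add: sin_diff_sin field_simps)
  then show ?thesis
    unfolding S_def L_def by (simp add: algebra_simps)
qed

lemma key_polynomial_bound:
  fixes u c t :: real
  assumes "38/100 \<le> u" and "u \<le> 87/100" and "t\<^sup>2 + c\<^sup>2 \<le> 1"
  shows "378 * u * (1 + c) - 27 * (t - c * u) + 261/10 > 0"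
proof -
  define d where "d = 1 + c"
  have "c\<^sup>2 \<le> 1"
    using assms(3) by (smt (verit) zero_le_power2)
  then have d_nonneg: "0 \<le> d"
    unfolding d_def by (simp add: abs_square_le_1 abs_le_iff)
  have "27 * t \<le> 75 * t\<^sup>2 + 243/100"
    using zero_le_power2[of "t - 9/50"] by (simp add: power2_eq_square algebra_simps)
  also have "\<dots> \<le> 150 * d - 75 * d\<^sup>2 + 243/100"
    using assms(3) unfolding d_def by (simp add: power2_eq_square algebra_simps)
  finally have t_bound: "27 * t \<le> 150 * d - 75 * d\<^sup>2 + 243/100" .
  have "(38/100) * d \<le> u * d"
    using assms(1) d_nonneg by (rule mult_right_mono)
  moreover have "378 * u * (1 + c) - 27 * (t - c * u) + 261/10 = 405 * (u * d) - 27 * u - 27 * t + 261/10"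
    unfolding d_def by (simp add: algebra_simps)
  ultimately show ?thesis
    using t_bound assms(2) d_nonneg zero_le_power2[of d] by linarith
qed

lemma key_trig_bound:
  fixes y \<theta> :: real
  assumes "38/100 \<le> sin y" and "sin y \<le> 87/100"
  shows "378 * sin y * (1 + cos \<theta>) - 27 * sin (\<theta> - y) + 261/10 > 0"
proof -
  have "(sin \<theta> * cos y)\<^sup>2 \<le> (sin \<theta>)\<^sup>2"
    by (simp add: power_mult_distrib mult_left_le abs_square_le_1)
  then have "(sin \<theta> * cos y)\<^sup>2 + (cos \<theta>)\<^sup>2 \<le> 1"
    using sin_cos_squared_add[of \<theta>] by linarith
  from key_polynomial_bound[OF assms this] show ?thesis
    by (simp add: sin_diff)
qed

lemma sin_half_bounds:
  fixes x :: real
  assumes "pi/4 < x" and "x < 2*pi/3"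
  shows "38/100 \<le> sin (x/2)" and "sin (x/2) \<le> 87/100"
proof -
  have cos_x: "cos x = 1 - 2 * (sin (x/2))\<^sup>2"
    using cos_double_sin[of "x/2"] by simp
  have sin_nonneg: "0 \<le> sin (x/2)"
    using assms pi_gt_zero by (intro sin_ge_zero) auto
  have "cos x < cos (pi/4)"
    using assms by (intro cos_monotone_0_pi) auto
  moreover have "sqrt 2 < 142/100"
    by (rule real_less_lsqrt) (auto simp: power2_eq_square)
  ultimately have "(38/100)\<^sup>2 < (sin (x/2))\<^sup>2"
    using cos_x by (simp add: cos_45 power2_eq_square)
  then show "38/100 \<le> sin (x/2)"
    using power_less_imp_less_base sin_nonneg by fastforce
  have "cos (2*pi/3) < cos x"
    using assms by (intro cos_monotone_0_pi) auto
  then have "(sin (x/2))\<^sup>2 < (87/100)\<^sup>2"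
    using cos_x by (simp add: cos_120 power2_eq_square)
  then show "sin (x/2) \<le> 87/100"
    using power_less_imp_less_base by fastforce
qed

theorem lemma3:
  fixes n :: int and x :: real
  assumes "n \<ge> 21" and "0 < x" and "x < 2 * pi / 3"
  shows "S n x > L n x"
proof -
  define \<theta> where "\<theta> = (of_int n + 3/2) * x"
  have shift: "(of_int n + 1) * x = \<theta> - x/2"
    unfolding \<theta>_def by (simp add: algebra_simps)
  have u_nonneg: "0 \<le> sin (x/2)"
    using assms by (intro sin_ge_zero) auto
  have c_nonneg: "0 \<le> 1 + cos \<theta>"
    using cos_ge_minus_one[of \<theta>] by linarith
  have "378 * sin (x/2) * (1 + cos \<theta>) \<le> 18 * of_int n * sin (x/2) * (1 + cos \<theta>)"
    using assms(1) u_nonneg c_nonneg by (intro mult_right_mono) auto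
  moreover have "0 \<le> 378 * sin (x/2) * (1 + cos \<theta>)"
    using u_nonneg c_nonneg by simp
  moreover have "- 1 \<le> sin (4*x)" "sin (5*x) \<le> 1" "sin (\<theta> - x/2) \<le> 1"
    by simp_all
  moreover have "0 \<le> sin (4*x) \<or> 378 * sin (x/2) * (1 + cos \<theta>) - 27 * sin (\<theta> - x/2) + 261/10 > 0"
  proof (cases "x \<le> pi/4")
    case True
    then show ?thesis using assms(2) by (auto intro: sin_ge_zero)
  next
    case False
    then show ?thesis using sin_half_bounds assms(3) key_trig_bound by simp
  qed
  ultimately show ?thesis
    using S_minus_L_eq[of n x] unfolding \<theta>_def[symmetric] shift by linarith
qed

end
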